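(* Let $a$ and $i$ be positive integers. Then $$\binom{3a+i}{a+i}=\sum_{k\geq0}\frac{i+3k}{i+k}\binom{i+k}{2k}\binom{3a+i}{a-k}=\sum_{k\geq0}\left[\binom{i+k}{2k}+\binom{i+k-1}{2k-1}\right]\binom{3a+i}{a-k}.$$
   Context: Ordinary binomial coefficients, with $\binom{n}{m}=0$ when $m<0$ or $m>n$. *)

theory Defs
  imports Complex_Main
begin

definition ibinom :: "int \<Rightarrow> int \<Rightarrow> int" where
  "ibinom n m = (if 0 \<le> m \<and> m \<le> n then int (nat n choose nat m) else 0)"

end

theory Submission
  imports Defs
begin

(* Write n = 3a + i and c_i(k) = C(i+k,2k) + C(i+k-1,2k-1), and let S_i be the sum of
   c_i(k) C(n,a-k) over k.  For i = 0 only k = 0 contributes, so S_0 = C(3a,a).  With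
   G(k) = C(i+k-1,2k-2) C(n,a-k) one has the termwise Wilf-Zeilberger identity
     (a+i+1) c_{i+1}(k) C(n+1,a-k) - (n+1) c_i(k) C(n,a-k) = (n+1) (G(k) - G(k+1)),
   and G(0) = G(a+1) = 0, so summing gives (a+i+1) S_{i+1} = (n+1) S_i.  This is the
   recurrence (a+i+1) C(n+1,a+i+1) = (n+1) C(n,a+i), so S_i = C(n,a+i) by induction on i.
   The first form of the sum follows from 2k C(i+k,2k) = (i+k) C(i+k-1,2k-1). *)

lemma ibinom_of_nat: "ibinom (int n) (int m) = int (n choose m)"
  by (simp add: ibinom_def binomial_eq_0)

lemma ibinom_absorption: "m * ibinom n m = n * ibinom (n - 1) (m - 1)"
proof (cases "m > 0 \<and> n > 0")
  case True
  then obtain N K where n1: "n - 1 = int N" and m1: "m - 1 = int K"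
    by (metis nonneg_int_cases int_one_le_iff_zero_less diff_ge_0_iff_ge)
  then have "n = int (Suc N)" "m = int (Suc K)"
    by simp_all
  then show ?thesis
    unfolding n1 m1 by (metis ibinom_of_nat Suc_times_binomial of_nat_mult)
qed (auto simp: ibinom_def)

lemma ibinom_row_recurrence: "m * ibinom n m = (n - m + 1) * ibinom n (m - 1)"
proof (cases "m > 0 \<and> n \<ge> 0")
  case True
  then obtain N K where n: "n = int N" and m1: "m - 1 = int K"
    by (metis nonneg_int_cases int_one_le_iff_zero_less diff_ge_0_iff_ge)
  then have m: "m = int (Suc K)"
    by simp
  have "int (Suc K) * int (N choose Suc K) = (int N - int K) * int (N choose K)"
  proof (cases "K \<le> N")
    case True
    then show ?thesis
      by (metis binomial_absorb_comp binomial_absorption of_nat_diff of_nat_mult)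
  qed (simp add: binomial_eq_0)
  then show ?thesis
    unfolding m1 unfolding n m ibinom_of_nat by simp
qed (auto simp: ibinom_def)

lemma ibinom_absorb_comp: "(n - m) * ibinom n m = n * ibinom (n - 1) m"
  using ibinom_row_recurrence[of "m + 1" n] ibinom_absorption[of "m + 1" n]
  by (simp add: algebra_simps)

definition binom_weight :: "int \<Rightarrow> int \<Rightarrow> int" where
  "binom_weight i k = ibinom (i+k) (2*k) + ibinom (i+k-1) (2*k-1)"

definition wz_cert :: "int \<Rightarrow> int \<Rightarrow> int \<Rightarrow> int" where
  "wz_cert a i k = ibinom (i+k-1) (2*k-2) * ibinom (3*a+i) (a-k)"

lemma binom_weight_0: "0 \<le> k \<Longrightarrow> binom_weight 0 k = (if k = 0 then 1 else 0)"
  by (simp add: binom_weight_def ibinom_def)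

lemma binom_weight_eq_ratio:
  fixes i k :: int
  assumes "0 < i + k"
  shows "real_of_int (i + 3*k) / real_of_int (i + k) * real_of_int (ibinom (i+k) (2*k))
       = real_of_int (binom_weight i k)"
proof -
  have "real_of_int (2*k * ibinom (i+k) (2*k)) = real_of_int ((i+k) * ibinom (i+k-1) (2*k-1))"
    using ibinom_absorption[of "2*k" "i+k"] by simp
  then show ?thesis
    using assms by (simp add: binom_weight_def field_simps)
qed

lemma binom_weight_wz_step:
  fixes a i k :: int
  assumes "0 \<le> a" "0 \<le> i" "0 \<le> k"
  shows "(a+i+1) * binom_weight (i+1) k * ibinom (3*a+i+1) (a-k)
           - (3*a+i+1) * binom_weight i k * ibinom (3*a+i) (a-k)
         = (3*a+i+1) * (wz_cert a i k - wz_cert a i (k+1))"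
proof -
  define A B P Q R where
    "A = ibinom (i+k-1) (2*k-2)" and "B = ibinom (i+k) (2*k-1)" and "P = ibinom (i+k) (2*k)"
    and "Q = ibinom (i+k-1) (2*k-1)" and "R = ibinom (i+k+1) (2*k)"
  define E X Y where
    "E = ibinom (3*a+i) (a-k)" and "X = ibinom (3*a+i+1) (a-k)" and "Y = ibinom (3*a+i) (a-k-1)"
  have weights: "binom_weight i k = P + Q" "binom_weight (i+1) k = R + B"
    by (simp_all add: binom_weight_def P_def Q_def R_def B_def algebra_simps)
  have certs: "wz_cert a i k = A * E" "wz_cert a i (k+1) = P * Y"
    by (simp_all add: wz_cert_def A_def E_def P_def Y_def algebra_simps)
  have X: "(2*a+i+k+1) * X = (3*a+i+1) * E"
    using ibinom_absorb_comp[of "3*a+i+1" "a-k"] by (simp add: X_def E_def algebra_simps)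
  have Y: "(a-k) * E = (2*a+i+k+1) * Y"
    using ibinom_row_recurrence[of "a-k" "3*a+i"] by (simp add: E_def Y_def algebra_simps)
  have "(a+i+1) * (R+B) * X - (3*a+i+1) * (P+Q) * E = (3*a+i+1) * (A*E - P*Y)"
  proof (cases "k = 0")
    case True
    then have "A = 0" "B = 0" "P = 1" "Q = 0" "R = 1"
      using \<open>0 \<le> i\<close> by (simp_all add: A_def B_def P_def Q_def R_def ibinom_def)
    then have "(2*a+i+k+1) * ((a+i+1) * (R+B) * X - (3*a+i+1) * (P+Q) * E)
             = (2*a+i+k+1) * ((3*a+i+1) * (A*E - P*Y))"
      using X Y True by algebra
    then show ?thesis
      using assms by simp
  next
    case False
    (* B, P, Q, R are rational multiples of A with denominators 2k - 1 and 2k;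
       clearing them turns the claim into an ideal membership problem. *)
    have "(2*k-1) * B = (i+k) * A"
      using ibinom_absorption[of "2*k-1" "i+k"] by (simp add: A_def B_def algebra_simps)
    moreover have "(2*k-1) * Q = (i-k+1) * A"
      using ibinom_row_recurrence[of "2*k-1" "i+k-1"] by (simp add: A_def Q_def algebra_simps)
    moreover have "2*k * P = (i-k+1) * B"
      using ibinom_row_recurrence[of "2*k" "i+k"] by (simp add: B_def P_def algebra_simps)
    moreover have "2*k * R = (i+k+1) * B"
      using ibinom_absorption[of "2*k" "i+k+1"] by (simp add: B_def R_def algebra_simps)
    ultimately have "(2*k*(2*k-1)*(2*a+i+k+1)) * ((a+i+1) * (R+B) * X - (3*a+i+1) * (P+Q) * E)
                   = (2*k*(2*k-1)*(2*a+i+k+1)) * ((3*a+i+1) * (A*E - P*Y))"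
      using X Y by algebra
    then show ?thesis
      using assms False by simp
  qed
  then show ?thesis
    unfolding weights certs E_def X_def .
qed

lemma sum_telescope_int:
  fixes f :: "int \<Rightarrow> 'a::ab_group_add"
  assumes "l - 1 \<le> u"
  shows "(\<Sum>k\<in>{l..u}. f k - f (k+1)) = f l - f (u+1)"
  using assms
proof (induction u rule: int_ge_induct)
  case (step u)
  then have "{l..u+1} = insert (u+1) {l..u}"
    by auto
  with step show ?case
    by simp
qed simp

lemma sum_binom_weight:
  fixes a i :: int
  assumes "0 \<le> a" and "0 \<le> i"
  shows "(\<Sum>k\<in>{0..a}. binom_weight i k * ibinom (3*a+i) (a-k)) = ibinom (3*a+i) (a+i)"
  using \<open>0 \<le> i\<close>
proof (induction i rule: int_ge_induct)
  case base
  have "(\<Sum>k\<in>{0..a}. binom_weight 0 k * ibinom (3*a) (a-k))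
      = (\<Sum>k\<in>{0..a}. if k = 0 then ibinom (3*a) a else 0)"
    by (intro sum.cong) (auto simp: binom_weight_0)
  then show ?case
    using \<open>0 \<le> a\<close> by simp
next
  case (step i)
  let ?S = "\<lambda>i. \<Sum>k\<in>{0..a}. binom_weight i k * ibinom (3*a+i) (a-k)"
  have "(a+i+1) * ?S (i+1) - (3*a+i+1) * ?S i
      = (\<Sum>k\<in>{0..a}. (a+i+1) * binom_weight (i+1) k * ibinom (3*a+i+1) (a-k)
                       - (3*a+i+1) * binom_weight i k * ibinom (3*a+i) (a-k))"
    by (simp add: sum_distrib_left sum_subtractf mult.assoc add.assoc)
  also have "\<dots> = (3*a+i+1) * (\<Sum>k\<in>{0..a}. wz_cert a i k - wz_cert a i (k+1))"
    using binom_weight_wz_step \<open>0 \<le> a\<close> \<open>0 \<le> i\<close> by (simp add: sum_distrib_left)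
  also have "\<dots> = (3*a+i+1) * (wz_cert a i 0 - wz_cert a i (a+1))"
    using \<open>0 \<le> a\<close> by (simp add: sum_telescope_int)
  also have "\<dots> = 0"
    by (simp add: wz_cert_def ibinom_def)
  finally have "(a+i+1) * ?S (i+1) = (3*a+i+1) * ibinom (3*a+i) (a+i)"
    using step.IH by simp
  also have "\<dots> = (a+i+1) * ibinom (3*a+i+1) (a+i+1)"
    using ibinom_absorption[of "a+i+1" "3*a+i+1"] by simp
  finally show ?case
    using \<open>0 \<le> a\<close> \<open>0 \<le> i\<close> by (simp add: add.assoc)
qed

theorem lemma2:
  fixes a i :: int
  assumes "a > 0" and "i > 0"
  shows "real_of_int (ibinom (3*a+i) (a+i))
           = (\<Sum>k\<in>{0..a}. real_of_int (i + 3*k) / real_of_int (i + k)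
                 * real_of_int (ibinom (i+k) (2*k)) * real_of_int (ibinom (3*a+i) (a-k)))
         \<and> ibinom (3*a+i) (a+i)
           = (\<Sum>k\<in>{0..a}. (ibinom (i+k) (2*k) + ibinom (i+k-1) (2*k-1)) * ibinom (3*a+i) (a-k))"
proof
  have summand: "real_of_int (i + 3*k) / real_of_int (i + k) * real_of_int (ibinom (i+k) (2*k))
                   * real_of_int (ibinom (3*a+i) (a-k))
               = real_of_int (binom_weight i k * ibinom (3*a+i) (a-k))" if "k \<in> {0..a}" for k
  proof -
    have "0 < i + k"
      using that \<open>i > 0\<close> by simp
    then show ?thesis
      by (simp only: of_int_mult binom_weight_eq_ratio)
  qed
  have "real_of_int (ibinom (3*a+i) (a+i))
      = real_of_int (\<Sum>k\<in>{0..a}. binom_weight i k * ibinom (3*a+i) (a-k))"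
    using assms by (simp add: sum_binom_weight)
  also have "\<dots> = (\<Sum>k\<in>{0..a}. real_of_int (i + 3*k) / real_of_int (i + k)
                 * real_of_int (ibinom (i+k) (2*k)) * real_of_int (ibinom (3*a+i) (a-k)))"
    unfolding of_int_sum using summand by (rule sum.cong[OF refl, symmetric])
  finally show "real_of_int (ibinom (3*a+i) (a+i)) = \<dots>" .
  show "ibinom (3*a+i) (a+i)
      = (\<Sum>k\<in>{0..a}. (ibinom (i+k) (2*k) + ibinom (i+k-1) (2*k-1)) * ibinom (3*a+i) (a-k))"
    using sum_binom_weight[of a i] assms by (simp add: binom_weight_def)
qed

end
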